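(* Let $c$ be a closure operator on $\mathcal A$. If $c$ is idempotent, i.e. $c_A(c_A(m))=c_A(m)$ for all $A\in\mathcal A$ and $m\in\operatorname{sub}_{\mathcal A}A$, then $c^\rho$ is idempotent, i.e. $c^\rho_X(c^\rho_X(m))=c^\rho_X(m)$ for all $X\in\mathcal X$ and $m\in\operatorname{sub}X$.
   Context: Standing setting. $\mathcal X$ and $\mathcal A$ are finitely complete categories; $\mathcal X$ carries a proper factorization system $(\mathcal E,\mathcal M)$ and $\mathcal A$ a proper factorization system $(\mathcal F,\mathcal N)$ (proper: every member of $\mathcal E$, resp. $\mathcal F$, is an epimorphism and every member of $\mathcal M$, resp. $\mathcal N$, is a monomorphism). $\mathcal A$ is a full reflective subcategory of $\mathcal X$ with reflector $R:\mathcal X\to\mathcal A$ and reflection (unit) $\rho_X:X\to RX$; as in the paper's setting, $\mathcal N\subseteq\mathcal M$ and $R\mathcal E\subseteq\mathcal F$. For $X\in\mathcal X$, $\operatorname{sub}X$ is the class $\mathcal M/X$ of $\mathcal M$-morphisms with codomain $X$, preordered by $m\le n$ iff $m=nj$ for some morphism $j$; for $A\in\mathcal A$, $\operatorname{sub}_{\mathcal A}A=\mathcal N/A$ with the same preorder. For $f:X\to Y$ and $m\in\operatorname{sub}X$, the image $f(m)\in\operatorname{sub}Y$ is the $\mathcal M$-part of the $(\mathcal E,\mathcal M)$-factorization of $fm$, and for $n\in\operatorname{sub}Y$ the preimage $f^{-1}(n)\in\operatorname{sub}X$ is the pullback of $n$ along $f$ (analogously in $\mathcal A$ using $(\mathcal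 F,\mathcal N)$). A closure operator $c$ on $\mathcal A$ (with respect to $\mathcal N$) is a family of maps $c_A:\operatorname{sub}_{\mathcal A}A\to\operatorname{sub}_{\mathcal A}A$ ($A\in\mathcal A$) such that $m\le c_A(m)$, $m\le n\Rightarrow c_A(m)\le c_A(n)$, and $f(c_A(m))\le c_B(f(m))$ for every morphism $f:A\to B$ of $\mathcal A$; closure operators on $\mathcal X$ (with respect to $\mathcal M$) are defined likewise. For an arbitrary morphism $g:M\to A$ of $\mathcal A$, write $g(1_M)$ for the $\mathcal N$-part of its $(\mathcal F,\mathcal N)$-factorization and put $c_A(g):=c_A(g(1_M))$. The $R$-initial lift of $c$ is the closure operator $c^\rho$ on $\mathcal X$ given by $c^\rho_X(m)=\rho_X^{-1}(c_{RX}(Rm))$ for $X\in\mathcal X$, $m\in\operatorname{sub}X$. *)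

theory Defs
  imports Main
begin

record ('o, 'a) cat =
  ob  :: "'o set"
  ar  :: "'a set"
  dm  :: "'a \<Rightarrow> 'o"
  cd  :: "'a \<Rightarrow> 'o"
  idm :: "'o \<Rightarrow> 'a"
  cmp :: "'a \<Rightarrow> 'a \<Rightarrow> 'a"   (* cmp C g f = g o f *)

definition hom :: "('o, 'a) cat \<Rightarrow> 'o \<Rightarrow> 'o \<Rightarrow> 'a set" where
  "hom C x y = {f \<in> ar C. dm C f = x \<and> cd C f = y}"

definition category :: "('o, 'a) cat \<Rightarrow> bool" where
  "category C \<longleftrightarrow>
     (\<forall>f\<in>ar C. dm C f \<in> ob C \<and> cd C f \<in> ob C) \<and>
     (\<forall>x\<in>ob C. idm C x \<in> hom C x x) \<and>
     (\<forall>f\<in>ar C. \<forall>g\<in>ar C. cd C f = dm C g \<longrightarrow> cmp C g f \<in> hom C (dm C f) (cd C g)) \<and>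
     (\<forall>f\<in>ar C. cmp C f (idm C (dm C f)) = f \<and> cmp C (idm C (cd C f)) f = f) \<and>
     (\<forall>f\<in>ar C. \<forall>g\<in>ar C. \<forall>h\<in>ar C. cd C f = dm C g \<and> cd C g = dm C h \<longrightarrow>
        cmp C h (cmp C g f) = cmp C (cmp C h g) f)"

definition iso :: "('o, 'a) cat \<Rightarrow> 'a \<Rightarrow> bool" where
  "iso C f \<longleftrightarrow> f \<in> ar C \<and> (\<exists>g\<in>hom C (cd C f) (dm C f).
      cmp C g f = idm C (dm C f) \<and> cmp C f g = idm C (cd C f))"

definition mono :: "('o, 'a) cat \<Rightarrow> 'a \<Rightarrow> bool" where
  "mono C f \<longleftrightarrow> f \<in> ar C \<and> (\<forall>g\<in>ar C. \<forall>h\<in>ar C.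
      cd C g = dm C f \<and> cd C h = dm C f \<and> dm C g = dm C h \<and> cmp C f g = cmp C f h \<longrightarrow> g = h)"

definition epi :: "('o, 'a) cat \<Rightarrow> 'a \<Rightarrow> bool" where
  "epi C f \<longleftrightarrow> f \<in> ar C \<and> (\<forall>g\<in>ar C. \<forall>h\<in>ar C.
      dm C g = cd C f \<and> dm C h = cd C f \<and> cd C g = cd C h \<and> cmp C g f = cmp C h f \<longrightarrow> g = h)"

definition is_pullback :: "('o, 'a) cat \<Rightarrow> 'a \<Rightarrow> 'a \<Rightarrow> 'a \<Rightarrow> 'a \<Rightarrow> bool" where
  "is_pullback C f n p q \<longleftrightarrow>
     f \<in> ar C \<and> n \<in> ar C \<and> cd C f = cd C n \<and>
     p \<in> hom C (dm C p) (dm C f) \<and> q \<in> hom C (dm C p) (dm C n) \<and>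
     cmp C f p = cmp C n q \<and>
     (\<forall>p'\<in>ar C. \<forall>q'\<in>ar C. dm C p' = dm C q' \<and> cd C p' = dm C f \<and> cd C q' = dm C n \<and>
        cmp C f p' = cmp C n q' \<longrightarrow>
        (\<exists>!u. u \<in> hom C (dm C p') (dm C p) \<and> cmp C p u = p' \<and> cmp C q u = q'))"

definition terminal :: "('o, 'a) cat \<Rightarrow> 'o \<Rightarrow> bool" where
  "terminal C t \<longleftrightarrow> t \<in> ob C \<and> (\<forall>x\<in>ob C. \<exists>!f. f \<in> hom C x t)"

definition finitely_complete :: "('o, 'a) cat \<Rightarrow> bool" where
  "finitely_complete C \<longleftrightarrow> (\<exists>t. terminal C t) \<and>
     (\<forall>f\<in>ar C. \<forall>n\<in>ar C. cd C f = cd C n \<longrightarrow> (\<exists>p q. is_pullback C f n p q))"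

definition factorization_system :: "('o, 'a) cat \<Rightarrow> 'a set \<Rightarrow> 'a set \<Rightarrow> bool" where
  "factorization_system C E M \<longleftrightarrow>
     E \<subseteq> ar C \<and> M \<subseteq> ar C \<and>
     (\<forall>e\<in>E. \<forall>i. iso C i \<and> cd C e = dm C i \<longrightarrow> cmp C i e \<in> E) \<and>
     (\<forall>e\<in>E. \<forall>i. iso C i \<and> cd C i = dm C e \<longrightarrow> cmp C e i \<in> E) \<and>
     (\<forall>m\<in>M. \<forall>i. iso C i \<and> cd C m = dm C i \<longrightarrow> cmp C i m \<in> M) \<and>
     (\<forall>m\<in>M. \<forall>i. iso C i \<and> cd C i = dm C m \<longrightarrow> cmp C m i \<in> M) \<and>
     (\<forall>f\<in>ar C. \<exists>e\<in>E. \<exists>m\<in>M. cd C e = dm C m \<and> f = cmp C m e) \<and>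
     (\<forall>e\<in>E. \<forall>m\<in>M. \<forall>u\<in>ar C. \<forall>v\<in>ar C.
        dm C u = dm C e \<and> cd C u = dm C m \<and> dm C v = cd C e \<and> cd C v = cd C m \<and>
        cmp C v e = cmp C m u \<longrightarrow>
        (\<exists>!d. d \<in> hom C (cd C e) (dm C m) \<and> cmp C d e = u \<and> cmp C m d = v))"

definition proper_fs :: "('o, 'a) cat \<Rightarrow> 'a set \<Rightarrow> 'a set \<Rightarrow> bool" where
  "proper_fs C E M \<longleftrightarrow> factorization_system C E M \<and> (\<forall>e\<in>E. epi C e) \<and> (\<forall>m\<in>M. mono C m)"

definition fullsub :: "('o, 'a) cat \<Rightarrow> 'o set \<Rightarrow> ('o, 'a) cat" where
  "fullsub C S = C\<lparr>ob := S, ar := {f \<in> ar C. dm C f \<in> S \<and> cd C f \<in> S}\<rparr>"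

definition reflection :: "('o, 'a) cat \<Rightarrow> 'o set \<Rightarrow> ('o \<Rightarrow> 'o) \<Rightarrow> ('o \<Rightarrow> 'a) \<Rightarrow> bool" where
  "reflection C S RO rho \<longleftrightarrow> S \<subseteq> ob C \<and>
     (\<forall>X\<in>ob C. RO X \<in> S \<and> rho X \<in> hom C X (RO X) \<and>
        (\<forall>A\<in>S. \<forall>f\<in>hom C X A. \<exists>!g. g \<in> hom C (RO X) A \<and> cmp C g (rho X) = f))"

definition reflA :: "('o, 'a) cat \<Rightarrow> ('o \<Rightarrow> 'o) \<Rightarrow> ('o \<Rightarrow> 'a) \<Rightarrow> 'a \<Rightarrow> 'a" where
  "reflA C RO rho f = (THE g. g \<in> hom C (RO (dm C f)) (RO (cd C f)) \<and>
      cmp C g (rho (dm C f)) = cmp C (rho (cd C f)) f)"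

definition sub :: "('o, 'a) cat \<Rightarrow> 'a set \<Rightarrow> 'o \<Rightarrow> 'a set" where
  "sub C M X = {m \<in> M. cd C m = X}"

definition sle :: "('o, 'a) cat \<Rightarrow> 'a \<Rightarrow> 'a \<Rightarrow> bool" where
  "sle C m n \<longleftrightarrow> (\<exists>j \<in> hom C (dm C m) (dm C n). m = cmp C n j)"

text \<open>Equality in the preordered class sub X (i.e. isomorphic subobjects).\<close>
definition seq :: "('o, 'a) cat \<Rightarrow> 'a \<Rightarrow> 'a \<Rightarrow> bool" where
  "seq C m n \<longleftrightarrow> sle C m n \<and> sle C n m"

text \<open>M-part of a (chosen) (E,M)-factorization; g(1_M) in the paper's notation.\<close>
definition mpart :: "('o, 'a) cat \<Rightarrow> 'a set \<Rightarrow> 'a set \<Rightarrow> 'a \<Rightarrow> 'a" where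
  "mpart C E M f = (SOME m. m \<in> M \<and> (\<exists>e\<in>E. cd C e = dm C m \<and> f = cmp C m e))"

definition image :: "('o, 'a) cat \<Rightarrow> 'a set \<Rightarrow> 'a set \<Rightarrow> 'a \<Rightarrow> 'a \<Rightarrow> 'a" where
  "image C E M f m = mpart C E M (cmp C f m)"

definition preimage :: "('o, 'a) cat \<Rightarrow> 'a \<Rightarrow> 'a \<Rightarrow> 'a" where
  "preimage C f n = (SOME p. \<exists>q. is_pullback C f n p q)"

definition closure_op :: "('o, 'a) cat \<Rightarrow> 'a set \<Rightarrow> 'a set \<Rightarrow> ('o \<Rightarrow> 'a \<Rightarrow> 'a) \<Rightarrow> bool" where
  "closure_op C E M c \<longleftrightarrow>
     (\<forall>X\<in>ob C. \<forall>m\<in>sub C M X. c X m \<in> sub C M X \<and> sle C m (c X m)) \<and>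
     (\<forall>X\<in>ob C. \<forall>m\<in>sub C M X. \<forall>n\<in>sub C M X. sle C m n \<longrightarrow> sle C (c X m) (c X n)) \<and>
     (\<forall>f\<in>ar C. \<forall>m\<in>sub C M (dm C f).
        sle C (image C E M f (c (dm C f) m)) (c (cd C f) (image C E M f m)))"

definition idempotent_co :: "('o, 'a) cat \<Rightarrow> 'a set \<Rightarrow> ('o \<Rightarrow> 'a \<Rightarrow> 'a) \<Rightarrow> bool" where
  "idempotent_co C M c \<longleftrightarrow> (\<forall>X\<in>ob C. \<forall>m\<in>sub C M X. seq C (c X (c X m)) (c X m))"

text \<open>The R-initial lift: c^rho_X(m) = rho_X^{-1}(c_{RX}(Rm)), where c_A(g) := c_A(g(1_M)).\<close>
definition initial_lift :: "('o, 'a) cat \<Rightarrow> 'o set \<Rightarrow> 'a set \<Rightarrow> 'a set \<Rightarrow>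
    ('o \<Rightarrow> 'o) \<Rightarrow> ('o \<Rightarrow> 'a) \<Rightarrow> ('o \<Rightarrow> 'a \<Rightarrow> 'a) \<Rightarrow> 'o \<Rightarrow> 'a \<Rightarrow> 'a" where
  "initial_lift C S F N RO rho c X m =
     preimage C (rho X) (c (RO X) (mpart (fullsub C S) F N (reflA C RO rho m)))"

end

theory Submission
  imports Defs
begin

(* Write Rbar k for the N-part of R k. Then c^rho_X = rho_X^-1 o c_RX o Rbar, and Rbar is left
   adjoint to rho_X^-1 as monotone maps between M-subobjects of X and N-subobjects of RX:
   k <= rho_X^-1(n) iff rho_X k factors through n (pullback), iff R k does (the domain of n lies
   in A, so factorizations through n descend along the unit), iff the N-part of R k does
   (diagonal fill-in). Conjugating an idempotent closure operator by a Galois connection gives an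
   idempotent operator.
   Throughout, sle C g n is used for arbitrary arrows g and means that g factors through n. *)

lemma galois_conjugate_closure_idempotent:
  assumes galois: "\<And>x y. x \<in> P \<Longrightarrow> y \<in> Q \<Longrightarrow> leP x (g y) \<longleftrightarrow> leQ (f x) y"
    and maps: "f ` P \<subseteq> Q" "g ` Q \<subseteq> P" "cl ` Q \<subseteq> Q"
    and reflP: "\<And>x. x \<in> P \<Longrightarrow> leP x x"
    and transQ: "\<And>x y z. x \<in> Q \<Longrightarrow> y \<in> Q \<Longrightarrow> z \<in> Q \<Longrightarrow> leQ x y \<Longrightarrow> leQ y z \<Longrightarrow> leQ x z"
    and extensive: "\<And>y. y \<in> Q \<Longrightarrow> leQ y (cl y)"
    and monotone: "\<And>y z. y \<in> Q \<Longrightarrow> z \<in> Q \<Longrightarrow> leQ y z \<Longrightarrow> leQ (cl y) (cl z)"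
    and idem: "\<And>y. y \<in> Q \<Longrightarrow> leQ (cl (cl y)) (cl y)"
    and "x \<in> P"
  shows "leP (g (cl (f (g (cl (f x)))))) (g (cl (f x)))"
    and "leP (g (cl (f x))) (g (cl (f (g (cl (f x))))))"
proof -
  define k where "k = g (cl (f x))"
  define k' where "k' = g (cl (f k))"
  have Q: "cl (f x) \<in> Q" "cl (cl (f x)) \<in> Q" "f k \<in> Q" "cl (f k) \<in> Q" "f k' \<in> Q"
    and P: "k \<in> P" "k' \<in> P"
    using maps \<open>x \<in> P\<close> unfolding k_def k'_def image_subset_iff by simp_all
  have "leQ (f k) (cl (f x))" using galois[OF P(1) Q(1)] reflP[OF P(1)] k_def by simp
  then have "leQ (cl (f k)) (cl (f x))"
    using transQ[OF Q(4,2,1) monotone[OF Q(3,1)] idem] maps \<open>x \<in> P\<close> by blast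
  moreover have "leQ (f k') (cl (f k))" using galois[OF P(2) Q(4)] reflP[OF P(2)] k'_def by simp
  ultimately have "leQ (f k') (cl (f x))" using transQ Q by blast
  then show "leP k' k" using galois[OF P(2) Q(1)] k_def by simp
  show "leP k k'" using galois[OF P(1) Q(4)] extensive[OF Q(3)] k'_def by simp
qed

lemma cat_comp:
  assumes "category C" "f \<in> ar C" "g \<in> ar C" "cd C f = dm C g"
  shows "cmp C g f \<in> ar C" "dm C (cmp C g f) = dm C f" "cd C (cmp C g f) = cd C g"
  using assms unfolding category_def hom_def by auto

lemma cat_assoc:
  assumes "category C" "f \<in> ar C" "g \<in> ar C" "h \<in> ar C" "cd C f = dm C g" "cd C g = dm C h"
  shows "cmp C h (cmp C g f) = cmp C (cmp C h g) f"
  using assms unfolding category_def by blast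

lemma cat_ob:
  assumes "category C" "f \<in> ar C"
  shows "dm C f \<in> ob C" "cd C f \<in> ob C"
  using assms unfolding category_def by auto

lemma cat_comp_hom:
  assumes "category C" "f \<in> hom C x y" "g \<in> hom C y z"
  shows "cmp C g f \<in> hom C x z"
  using assms cat_comp[OF assms(1)] by (auto simp: hom_def)

lemma fullsub_simps [simp]:
  "ob (fullsub C S) = S" "ar (fullsub C S) = {f \<in> ar C. dm C f \<in> S \<and> cd C f \<in> S}"
  "dm (fullsub C S) = dm C" "cd (fullsub C S) = cd C"
  "idm (fullsub C S) = idm C" "cmp (fullsub C S) = cmp C"
  by (simp_all add: fullsub_def)

lemma hom_fullsub: "hom (fullsub C S) x y = {f \<in> hom C x y. x \<in> S \<and> y \<in> S}"
  by (auto simp: hom_def)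

lemma category_fullsub:
  assumes "category C" "S \<subseteq> ob C"
  shows "category (fullsub C S)"
  using assms unfolding category_def hom_fullsub by (auto simp: hom_def)

lemma sle_refl:
  assumes "category C" "m \<in> ar C"
  shows "sle C m m"
  using assms unfolding sle_def category_def hom_def by (metis (no_types, lifting) mem_Collect_eq)

lemma sle_trans:
  assumes "category C" "sle C m n" "sle C n p" "n \<in> ar C" "p \<in> ar C"
  shows "sle C m p"
proof -
  obtain j where j: "j \<in> hom C (dm C m) (dm C n)" "m = cmp C n j"
    using assms(2) by (auto simp: sle_def)
  obtain i where i: "i \<in> hom C (dm C n) (dm C p)" "n = cmp C p i"
    using assms(3) by (auto simp: sle_def)
  have "m = cmp C p (cmp C i j)"
    using i j assms cat_assoc[OF assms(1), of j i p] by (auto simp: hom_def)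
  moreover have "cmp C i j \<in> hom C (dm C m) (dm C p)"
    using cat_comp_hom[OF assms(1) j(1) i(1)] .
  ultimately show ?thesis unfolding sle_def by blast
qed

lemma sle_fullsub_iff:
  assumes "m \<in> ar (fullsub C S)" "n \<in> ar (fullsub C S)"
  shows "sle (fullsub C S) m n \<longleftrightarrow> sle C m n"
  using assms by (auto simp: sle_def hom_fullsub)

lemma reflection_subset: "reflection C S RO rho \<Longrightarrow> S \<subseteq> ob C"
  by (simp add: reflection_def)

lemma reflection_unit:
  assumes "reflection C S RO rho" "X \<in> ob C"
  shows "RO X \<in> S" "rho X \<in> hom C X (RO X)"
  using assms unfolding reflection_def by auto

lemma reflection_factor:
  assumes "reflection C S RO rho" "X \<in> ob C" "A \<in> S" "f \<in> hom C X A"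
  shows "\<exists>!g. g \<in> hom C (RO X) A \<and> cmp C g (rho X) = f"
  using assms unfolding reflection_def by blast

lemma reflA_natural:
  assumes "category C" "reflection C S RO rho" "k \<in> ar C"
  shows "reflA C RO rho k \<in> hom C (RO (dm C k)) (RO (cd C k))"
    "cmp C (reflA C RO rho k) (rho (dm C k)) = cmp C (rho (cd C k)) k"
proof -
  have ob: "dm C k \<in> ob C" "cd C k \<in> ob C" using cat_ob[OF assms(1,3)] by auto
  have "cmp C (rho (cd C k)) k \<in> hom C (dm C k) (RO (cd C k))"
    using cat_comp_hom[OF assms(1) _ reflection_unit(2)[OF assms(2) ob(2)]] assms(3)
    by (simp add: hom_def)
  from reflection_factor[OF assms(2) ob(1) reflection_unit(1)[OF assms(2) ob(2)] this]
  have "\<exists>!g. g \<in> hom C (RO (dm C k)) (RO (cd C k)) \<and>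
      cmp C g (rho (dm C k)) = cmp C (rho (cd C k)) k" .
  from theI'[OF this] show "reflA C RO rho k \<in> hom C (RO (dm C k)) (RO (cd C k))"
    "cmp C (reflA C RO rho k) (rho (dm C k)) = cmp C (rho (cd C k)) k"
    unfolding reflA_def by auto
qed

lemma reflA_sle_iff:
  assumes "category C" "reflection C S RO rho" "k \<in> ar C"
    and "n \<in> ar C" "dm C n \<in> S" "cd C n = RO (cd C k)"
  shows "sle C (reflA C RO rho k) n \<longleftrightarrow> sle C (cmp C (rho (cd C k)) k) n"
proof -
  let ?P = "dm C k" and ?Y = "cd C k" and ?Rk = "reflA C RO rho k"
  have P: "?P \<in> ob C" "?Y \<in> ob C" using cat_ob[OF assms(1,3)] by auto
  note unit = reflection_unit[OF assms(2)]
  note Rk = reflA_natural[OF assms(1-3)]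
  have n: "n \<in> hom C (dm C n) (RO ?Y)" using assms(4,6) by (simp add: hom_def)
  have rk: "cmp C (rho ?Y) k \<in> hom C ?P (RO ?Y)"
    using cat_comp_hom[OF assms(1) _ unit(2)[OF P(2)]] assms(3) by (simp add: hom_def)
  show ?thesis
  proof
    assume "sle C ?Rk n"
    then obtain j where j: "j \<in> hom C (RO ?P) (dm C n)" "?Rk = cmp C n j"
      using Rk(1) by (auto simp: sle_def hom_def)
    have "cmp C (rho ?Y) k = cmp C n (cmp C j (rho ?P))"
      using Rk(2) j unit(2)[OF P(1)] n cat_assoc[OF assms(1), of "rho ?P" j n]
      by (auto simp: hom_def)
    moreover have "cmp C j (rho ?P) \<in> hom C ?P (dm C n)"
      using cat_comp_hom[OF assms(1) unit(2)[OF P(1)] j(1)] .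
    ultimately show "sle C (cmp C (rho ?Y) k) n"
      using rk unfolding sle_def by (auto simp: hom_def)
  next
    assume "sle C (cmp C (rho ?Y) k) n"
    then obtain v where v: "v \<in> hom C ?P (dm C n)" "cmp C (rho ?Y) k = cmp C n v"
      using rk by (auto simp: sle_def hom_def)
    \<comment> \<open>v descends along the unit since dm n lies in S; uniqueness then gives Rk = n w\<close>
    obtain w where w: "w \<in> hom C (RO ?P) (dm C n)" "cmp C w (rho ?P) = v"
      using reflection_factor[OF assms(2) P(1) assms(5) v(1)] by blast
    have nw: "cmp C n w \<in> hom C (RO ?P) (RO ?Y)" using cat_comp_hom[OF assms(1) w(1) n] .
    have "cmp C (cmp C n w) (rho ?P) = cmp C (rho ?Y) k"
      using w v n unit(2)[OF P(1)] cat_assoc[OF assms(1), of "rho ?P" w n]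
      by (auto simp: hom_def)
    then have "?Rk = cmp C n w"
      using reflection_factor[OF assms(2) P(1) unit(1)[OF P(2)] rk] Rk nw by blast
    then show "sle C ?Rk n" using w(1) Rk(1) by (auto simp: sle_def hom_def)
  qed
qed

lemma mpart_factorization:
  assumes "factorization_system C E M" "g \<in> ar C"
  shows "mpart C E M g \<in> M" "\<exists>e\<in>E. cd C e = dm C (mpart C E M g) \<and> g = cmp C (mpart C E M g) e"
proof -
  have "\<exists>e\<in>E. \<exists>m\<in>M. cd C e = dm C m \<and> g = cmp C m e"
    using assms unfolding factorization_system_def by simp
  then have "\<exists>m. m \<in> M \<and> (\<exists>e\<in>E. cd C e = dm C m \<and> g = cmp C m e)" by blast
  from someI_ex[OF this] show "mpart C E M g \<in> M"
    "\<exists>e\<in>E. cd C e = dm C (mpart C E M g) \<and> g = cmp C (mpart C E M g) e"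
    unfolding mpart_def by simp_all
qed

lemma factorization_diagonal:
  assumes "factorization_system C E M" "e \<in> E" "m \<in> M" "u \<in> ar C" "v \<in> ar C"
    and "dm C u = dm C e" "cd C u = dm C m" "dm C v = cd C e" "cd C v = cd C m"
    and "cmp C v e = cmp C m u"
  shows "\<exists>d\<in>hom C (cd C e) (dm C m). cmp C d e = u \<and> cmp C m d = v"
  using assms unfolding factorization_system_def by blast

lemma
  assumes "category C" "factorization_system C E M" "g \<in> ar C"
  shows cd_mpart: "cd C (mpart C E M g) = cd C g"
    and sle_mpart: "sle C g (mpart C E M g)"
proof -
  let ?m = "mpart C E M g"
  have EM: "E \<subseteq> ar C" "M \<subseteq> ar C" using assms(2) by (simp_all add: factorization_system_def)
  obtain e where e: "e \<in> E" "cd C e = dm C ?m" and g: "cmp C ?m e = g"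
    using mpart_factorization[OF assms(2,3)] by metis
  have "e \<in> ar C" "?m \<in> ar C" using e(1) mpart_factorization(1)[OF assms(2,3)] EM by auto
  note comp = cat_comp[OF assms(1) this e(2), unfolded g]
  show "cd C ?m = cd C g" using comp(3) ..
  have "e \<in> hom C (dm C g) (dm C ?m)" using comp e \<open>e \<in> ar C\<close> by (simp add: hom_def)
  then show "sle C g ?m" unfolding sle_def using g by metis
qed

lemma mpart_sle_iff:
  assumes "category C" "factorization_system C E M" "g \<in> ar C" "n \<in> M"
  shows "sle C (mpart C E M g) n \<longleftrightarrow> sle C g n"
proof
  let ?m = "mpart C E M g"
  have EM: "E \<subseteq> ar C" "M \<subseteq> ar C" using assms(2) by (simp_all add: factorization_system_def)
  have m: "?m \<in> M" "?m \<in> ar C" using mpart_factorization(1)[OF assms(2,3)] EM by auto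
  show "sle C ?m n \<Longrightarrow> sle C g n"
    using sle_trans[OF assms(1) sle_mpart[OF assms(1-3)]] m assms(4) EM by blast
  assume "sle C g n"
  then obtain u where u: "u \<in> hom C (dm C g) (dm C n)" and gu: "g = cmp C n u"
    unfolding sle_def by blast
  obtain e where e: "e \<in> E" "cd C e = dm C ?m" and ge: "cmp C ?m e = g"
    using mpart_factorization[OF assms(2,3)] by metis
  have "e \<in> ar C" using e(1) EM by auto
  have "dm C g = dm C e" using cat_comp(2)[OF assms(1) \<open>e \<in> ar C\<close> m(2) e(2), unfolded ge] .
  moreover have "cd C ?m = cd C n"
    using cd_mpart[OF assms(1-3)] u assms(4) EM cat_comp(3)[OF assms(1)] unfolding gu
    by (auto simp: hom_def)
  ultimately obtain d where "d \<in> hom C (cd C e) (dm C n)" "cmp C n d = ?m"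
    using factorization_diagonal[OF assms(2) e(1) assms(4), of u ?m] u m e ge gu
    by (auto simp: hom_def)
  then show "sle C ?m n" unfolding sle_def using e(2) by metis
qed

lemma preimage_pullback:
  assumes "finitely_complete C" "f \<in> ar C" "n \<in> ar C" "cd C f = cd C n"
  shows "\<exists>q. is_pullback C f n (preimage C f n) q"
proof -
  have "\<exists>p q. is_pullback C f n p q"
    using assms unfolding finitely_complete_def by blast
  then show ?thesis unfolding preimage_def by (rule someI_ex)
qed

lemma preimage_arrow:
  assumes "finitely_complete C" "f \<in> ar C" "n \<in> ar C" "cd C f = cd C n"
  shows "preimage C f n \<in> ar C" "cd C (preimage C f n) = dm C f"
  using preimage_pullback[OF assms] unfolding is_pullback_def hom_def by auto

lemma pullback_sle_iff:
  assumes "category C" "is_pullback C f n p q" "k \<in> ar C" "cd C k = dm C f"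
  shows "sle C k p \<longleftrightarrow> sle C (cmp C f k) n"
proof
  have p: "p \<in> hom C (dm C p) (dm C f)" "q \<in> hom C (dm C p) (dm C n)" "cmp C f p = cmp C n q"
    and f: "f \<in> ar C" "n \<in> ar C"
    using assms(2) unfolding is_pullback_def by auto
  have fk: "dm C (cmp C f k) = dm C k" using cat_comp(2)[OF assms(1,3) f(1) assms(4)] .
  show "sle C (cmp C f k) n" if "sle C k p"
  proof -
    obtain j where j: "j \<in> hom C (dm C k) (dm C p)" "k = cmp C p j"
      using \<open>sle C k p\<close> unfolding sle_def by blast
    have "cmp C f k = cmp C n (cmp C q j)"
      using j p f cat_assoc[OF assms(1), of j p f] cat_assoc[OF assms(1), of j q n]
      by (auto simp: hom_def)
    then show ?thesis unfolding sle_def fk using cat_comp_hom[OF assms(1) j(1) p(2)] by blast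
  qed
  show "sle C k p" if "sle C (cmp C f k) n"
  proof -
    obtain v where v: "v \<in> hom C (dm C k) (dm C n)" "cmp C f k = cmp C n v"
      using \<open>sle C (cmp C f k) n\<close> unfolding sle_def fk by blast
    have "v \<in> ar C" "dm C k = dm C v" "cd C v = dm C n" using v(1) by (auto simp: hom_def)
    with assms(2-4) v(2)
    have "\<exists>!u. u \<in> hom C (dm C k) (dm C p) \<and> cmp C p u = k \<and> cmp C q u = v"
      unfolding is_pullback_def by blast
    then show ?thesis unfolding sle_def by metis
  qed
qed

definition reflected_image :: "('o, 'a) cat \<Rightarrow> 'o set \<Rightarrow> 'a set \<Rightarrow> 'a set \<Rightarrow>
    ('o \<Rightarrow> 'o) \<Rightarrow> ('o \<Rightarrow> 'a) \<Rightarrow> 'a \<Rightarrow> 'a" where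
  "reflected_image C S F N RO rho k = mpart (fullsub C S) F N (reflA C RO rho k)"

lemma initial_lift_eq:
  "initial_lift C S F N RO rho c X m =
     preimage C (rho X) (c (RO X) (reflected_image C S F N RO rho m))"
  by (simp add: initial_lift_def reflected_image_def)

lemma reflA_fullsub:
  assumes "category C" "reflection C S RO rho" "k \<in> ar C"
  shows "reflA C RO rho k \<in> ar (fullsub C S)"
  using reflA_natural(1)[OF assms] reflection_unit(1)[OF assms(2)] cat_ob[OF assms(1,3)]
  by (simp add: hom_def)

lemma reflected_image_sub:
  assumes "category C" "factorization_system (fullsub C S) F N" "reflection C S RO rho"
    and "k \<in> ar C"
  shows "reflected_image C S F N RO rho k \<in> sub (fullsub C S) N (RO (cd C k))"
proof -
  have "category (fullsub C S)"
    using category_fullsub[OF assms(1) reflection_subset[OF assms(3)]] .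
  note Rk = reflA_fullsub[OF assms(1,3,4)]
  show ?thesis
    using mpart_factorization(1)[OF assms(2) Rk] cd_mpart[OF \<open>category (fullsub C S)\<close> assms(2) Rk]
      reflA_natural(1)[OF assms(1,3,4)]
    unfolding reflected_image_def sub_def by (simp add: hom_def)
qed

lemma sle_preimage_iff:
  assumes "category C" "finitely_complete C" "factorization_system (fullsub C S) F N"
    and "reflection C S RO rho" "k \<in> ar C" "cd C k = X" "n \<in> sub (fullsub C S) N (RO X)"
  shows "sle C k (preimage C (rho X) n) \<longleftrightarrow> sle (fullsub C S) (reflected_image C S F N RO rho k) n"
proof -
  let ?A = "fullsub C S" and ?Rk = "reflA C RO rho k"
  have catA: "category ?A" using category_fullsub[OF assms(1) reflection_subset[OF assms(4)]] .
  have X: "X \<in> ob C" using cat_ob(2)[OF assms(1,5)] assms(6) by simp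
  have rho: "rho X \<in> ar C" "cd C (rho X) = RO X" "dm C (rho X) = X"
    using reflection_unit(2)[OF assms(4) X] by (auto simp: hom_def)
  have n: "n \<in> N" "n \<in> ar ?A" "cd C n = RO X"
    using assms(3,7) by (auto simp: sub_def factorization_system_def)
  obtain q where pb: "is_pullback C (rho X) n (preimage C (rho X) n) q"
    using preimage_pullback[OF assms(2) rho(1), of n] n rho by auto
  have "sle C k (preimage C (rho X) n) \<longleftrightarrow> sle C (cmp C (rho X) k) n"
    using pullback_sle_iff[OF assms(1) pb assms(5)] assms(6) rho by simp
  also have "\<dots> \<longleftrightarrow> sle C ?Rk n"
    using reflA_sle_iff[OF assms(1,4,5), of n] n assms(6) by simp
  also have "\<dots> \<longleftrightarrow> sle ?A ?Rk n"
    using sle_fullsub_iff[OF reflA_fullsub[OF assms(1,4,5)] n(2)] by simp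
  also have "\<dots> \<longleftrightarrow> sle ?A (reflected_image C S F N RO rho k) n"
    using mpart_sle_iff[OF catA assms(3) reflA_fullsub[OF assms(1,4,5)] n(1)]
    unfolding reflected_image_def by simp
  finally show ?thesis .
qed

lemma initial_lift_twice:
  assumes "category C" "finitely_complete C" "factorization_system (fullsub C S) F N"
    and "reflection C S RO rho" "closure_op (fullsub C S) F N c" "idempotent_co (fullsub C S) N c"
    and "m \<in> ar C" "cd C m = X"
  shows "seq C (initial_lift C S F N RO rho c X (initial_lift C S F N RO rho c X m))
    (initial_lift C S F N RO rho c X m)"
proof -
  let ?A = "fullsub C S"
  let ?P = "{k \<in> ar C. cd C k = X}" and ?Q = "sub ?A N (RO X)"
    and ?f = "reflected_image C S F N RO rho" and ?g = "preimage C (rho X)" and ?cl = "c (RO X)"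
  have "X \<in> ob C" using cat_ob(2)[OF assms(1,7)] assms(8) by simp
  then have rho: "rho X \<in> ar C" "cd C (rho X) = RO X" "dm C (rho X) = X" "RO X \<in> S"
    using reflection_unit[OF assms(4)] by (auto simp: hom_def)
  have Q: "\<And>n. n \<in> ?Q \<Longrightarrow> n \<in> ar ?A \<and> cd C n = RO X"
    using assms(3) by (auto simp: sub_def factorization_system_def)
  have "\<And>k n. k \<in> ?P \<Longrightarrow> n \<in> ?Q \<Longrightarrow> sle C k (?g n) \<longleftrightarrow> sle ?A (?f k) n"
    using sle_preimage_iff[OF assms(1-4)] by blast
  moreover have "?f ` ?P \<subseteq> ?Q" using reflected_image_sub[OF assms(1,3,4)] by auto
  moreover have "?g ` ?Q \<subseteq> ?P" using preimage_arrow[OF assms(2) rho(1)] Q rho by auto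
  moreover have "?cl ` ?Q \<subseteq> ?Q" "\<And>n. n \<in> ?Q \<Longrightarrow> sle ?A n (?cl n)"
    and "\<And>n n'. n \<in> ?Q \<Longrightarrow> n' \<in> ?Q \<Longrightarrow> sle ?A n n' \<Longrightarrow> sle ?A (?cl n) (?cl n')"
    using assms(5) rho(4) unfolding closure_op_def by auto
  moreover have "\<And>n. n \<in> ?Q \<Longrightarrow> sle ?A (?cl (?cl n)) (?cl n)"
    using assms(6) rho(4) unfolding idempotent_co_def seq_def by auto
  moreover have "\<And>k. k \<in> ?P \<Longrightarrow> sle C k k" using sle_refl[OF assms(1)] by blast
  moreover have "\<And>n n' n''. n \<in> ?Q \<Longrightarrow> n' \<in> ?Q \<Longrightarrow> n'' \<in> ?Q \<Longrightarrow>
      sle ?A n n' \<Longrightarrow> sle ?A n' n'' \<Longrightarrow> sle ?A n n''"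
    using sle_trans[OF category_fullsub[OF assms(1) reflection_subset[OF assms(4)]]] Q by blast
  moreover have "m \<in> ?P" using assms(7,8) by simp
  ultimately show ?thesis
    unfolding seq_def initial_lift_eq
    using galois_conjugate_closure_idempotent[of ?P ?Q "sle C" ?g "sle ?A" ?f ?cl m] by blast
qed

theorem proposition2p3:
  fixes C :: "('o, 'a) cat" and S :: "'o set"
    and E M F N :: "'a set"
    and RO :: "'o \<Rightarrow> 'o" and rho :: "'o \<Rightarrow> 'a"
    and c :: "'o \<Rightarrow> 'a \<Rightarrow> 'a"
  assumes "category C" and "finitely_complete C" and "proper_fs C E M"
    and "finitely_complete (fullsub C S)" and "proper_fs (fullsub C S) F N"
    and "reflection C S RO rho"
    and "N \<subseteq> M" and "\<forall>e\<in>E. reflA C RO rho e \<in> F"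
    and "closure_op (fullsub C S) F N c"
    and "idempotent_co (fullsub C S) N c"
  shows "idempotent_co C M (initial_lift C S F N RO rho c)"
  unfolding idempotent_co_def
proof (intro ballI)
  fix X m assume "m \<in> sub C M X"
  moreover have "M \<subseteq> ar C" using assms(3) by (simp add: proper_fs_def factorization_system_def)
  moreover have "factorization_system (fullsub C S) F N" using assms(5) by (simp add: proper_fs_def)
  ultimately show "seq C (initial_lift C S F N RO rho c X (initial_lift C S F N RO rho c X m))
      (initial_lift C S F N RO rho c X m)"
    using initial_lift_twice[OF assms(1,2) _ assms(6,9,10)] by (auto simp: sub_def)
qed

end
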